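(* Let $G$ be as in the context and assume $G\in\mathcal{RH}_\infty$. Let $K$ be a proper real rational transfer matrix (mapping $y$ to $u$). Then $K$ is a retrofit controller if and only if there exists $Q\in\mathcal{RH}_\infty$ such that $$K=(I+QG_{yu})^{-1}Q \qquad\text{and}\qquad G_{wu}\,Q\,G_{yv}=0 .$$ (Here $Q$ is the Youla parameter of $K$, namely $Q=K(I-G_{yu}K)^{-1}$.)
   Context: A subsystem is a proper real rational transfer matrix $G$ with inputs $(v,d,u)$ (interaction input, disturbance input, control input) and outputs $(w,z,y)$ (interaction output, evaluation output, measurement output): $$\begin{bmatrix} w\\ z\\ y\end{bmatrix}=\begin{bmatrix} G_{wv}&G_{wd}&G_{wu}\\ G_{zv}&G_{zd}&G_{zu}\\ G_{yv}&G_{yd}&G_{yu}\end{bmatrix}\begin{bmatrix} v\\ d\\ u\end{bmatrix}.$$ An environment is a proper real rational transfer matrix $\overline{G}$ closing the interaction loop by $v=\overline{G}w$; a (sub)controller is a proper real rational $K$ closing $u=Ky$. $\mathcal{RH}_\infty$ is the set of stable, proper, real rational transfer matrices. All feedback interconnections are assumed well-posed, and internal stability is meant in the standard sense (all closed-loop maps from signals injected at every interconnection point to all interconnection signals belong to $\mathcal{RH}_\infty$). For transfer matrices $H$ and $C$, the positive feedback system $y=Hu$, $u=Cy$ is denoted $\mathcal F(H,C)$, and $C$ is called a stabilizing controller for $H$ if $\mathcal F(H,C)$ is internally stable. The preexisting system is $G_{\rm pre}:=\mathcal F(\overline{G},G_{wv})$, i.e. the loop $w=G_{wv}v$, $v=\overline{G}w$.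 The set of admissible environments is $\overline{\mathcal G}:=\{\overline{G}: G_{\rm pre}\text{ is internally stable}\}$. A controller $u=Ky$ is a retrofit controller if the entire feedback system formed by $G$, $u=Ky$ and $v=\overline{G}w$ is internally stable for every $\overline{G}\in\overline{\mathcal G}$. *)

theory Defs
  imports "HOL-Computational_Algebra.Polynomial" "HOL-Computational_Algebra.Fraction_Field"
    "Jordan_Normal_Form.Gauss_Jordan_Elimination"
begin

text \<open>Real rational transfer functions: the field of fractions of real polynomials.
  Transfer matrices are matrices over this field.\<close>
type_synonym rfun = "real poly fract"
type_synonym tfm = "rfun mat"

definition proper_rf :: "rfun \<Rightarrow> bool" where
  "proper_rf r \<longleftrightarrow> (\<exists>p q. q \<noteq> 0 \<and> r = Fract p q \<and> degree p \<le> degree q)"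

definition stable_rf :: "rfun \<Rightarrow> bool" where
  "stable_rf r \<longleftrightarrow> (\<exists>p q. q \<noteq> 0 \<and> r = Fract p q \<and> degree p \<le> degree q \<and>
      (\<forall>z::complex. poly (map_poly complex_of_real q) z = 0 \<longrightarrow> Re z < 0))"

definition proper_tfm :: "tfm \<Rightarrow> bool" where
  "proper_tfm M \<longleftrightarrow> (\<forall>i<dim_row M. \<forall>j<dim_col M. proper_rf (M $$ (i,j)))"

definition RHinf :: "tfm \<Rightarrow> bool" where
  "RHinf M \<longleftrightarrow> (\<forall>i<dim_row M. \<forall>j<dim_col M. stable_rf (M $$ (i,j)))"

text \<open>Internal stability of the positive feedback system F(H,C): y = H u + e1, u = C y + e2.
  The map (e1,e2) to (y,u) is the inverse of [[I,-H],[-C,I]]; internal stability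
  means this matrix is invertible over the rational functions and its inverse is in RH-infinity
  (this includes well-posedness).\<close>
definition int_stable :: "tfm \<Rightarrow> tfm \<Rightarrow> bool" where
  "int_stable H C \<longleftrightarrow>
     dim_row C = dim_col H \<and> dim_col C = dim_row H \<and>
     (let M = four_block_mat (1\<^sub>m (dim_row H)) (- H) (- C) (1\<^sub>m (dim_col H)) in
       \<exists>B. inverts_mat M B \<and> inverts_mat B M \<and> RHinf B)"

definition blk3 :: "tfm \<Rightarrow> tfm \<Rightarrow> tfm \<Rightarrow> tfm \<Rightarrow> tfm \<Rightarrow> tfm \<Rightarrow> tfm \<Rightarrow> tfm \<Rightarrow> tfm \<Rightarrow> tfm" where
  "blk3 A11 A12 A13 A21 A22 A23 A31 A32 A33 =
     four_block_mat (four_block_mat A11 A12 A21 A22)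
       (four_block_mat A13 (0\<^sub>m (dim_row A13) 0) A23 (0\<^sub>m (dim_row A23) 0))
       (four_block_mat A31 A32 (0\<^sub>m 0 (dim_col A31)) (0\<^sub>m 0 (dim_col A32))) A33"

end

theory Submission
  imports Defs "Jordan_Normal_Form.Determinant"
begin

text \<open>For a stable plant \<open>H\<close>, internal stability of \<open>F(H, C)\<close> amounts to a stable solution
  \<open>W\<close> of \<open>W = C + C H W\<close>; for a stable controller it amounts to a stable solution \<open>R\<close> of
  \<open>R = H + H C R\<close>. With the trivial environment, the \<open>(u, y)\<close> block of the closed loop is the
  Youla parameter \<open>Q\<close> of \<open>K\<close>, whence \<open>K = (I + Q Gyu)\<^sup>-\<^sup>1 Q\<close>; under this controller every
  environment sees the interaction map \<open>Gwv + Gwu Q Gyv\<close> instead of \<open>Gwv\<close>.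

  If \<open>Gwu Q Gyv = 0\<close>, the closed loop of the whole system is written down explicitly in terms
  of \<open>Q\<close> and the closed loop \<open>R\<close> of the environment with \<open>Gwv\<close>, so \<open>K\<close> is a retrofit
  controller. Conversely, if an entry \<open>f\<close> of \<open>Gwu Q Gyv\<close> is nonzero, take \<open>r = k/(s + 1)\<close>
  with \<open>r f = 1\<close> at some \<open>s\<^sub>0 > 0\<close> and put the single gain \<open>h = r/(1 + r g)\<close>, \<open>g\<close> the
  corresponding entry of \<open>Gwv\<close>, into the environment. It is admissible, since its loop with
  \<open>Gwv\<close> is \<open>r\<close>; but a stable closed loop would contain a stable \<open>x = h + h (g + f) x\<close>,
  i.e. \<open>x = r + r f x\<close>, and evaluating at \<open>s\<^sub>0\<close> gives \<open>r(s\<^sub>0) = 0\<close>.\<close>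

definition hurwitz :: "real poly \<Rightarrow> bool" where
  "hurwitz q \<longleftrightarrow> (\<forall>z. poly (map_poly complex_of_real q) z = 0 \<longrightarrow> Re z < 0)"

lemma map_poly_of_real_mult:
  "map_poly complex_of_real (p * q) = map_poly complex_of_real p * map_poly complex_of_real q"
  by (simp add: poly_eq_iff coeff_mult coeff_map_poly)

lemma poly_map_poly_of_real: "poly (map_poly complex_of_real q) (of_real x) = of_real (poly q x)"
  by (induction q) (auto simp: map_poly_pCons)

lemma hurwitz_nonzero: "hurwitz q \<Longrightarrow> q \<noteq> 0"
  unfolding hurwitz_def by (metis map_poly_0 poly_0 zero_complex.simps(1) less_irrefl)

lemma hurwitz_mult: "hurwitz p \<Longrightarrow> hurwitz q \<Longrightarrow> hurwitz (p * q)"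
  unfolding hurwitz_def by (simp add: map_poly_of_real_mult)

lemma hurwitz_1: "hurwitz 1"
  unfolding hurwitz_def by simp

lemma hurwitz_linear: "hurwitz [:1, 1:]"
  unfolding hurwitz_def by (simp add: map_poly_pCons add_eq_0_iff)

lemma poly_hurwitz_nonneg_nonzero: "hurwitz q \<Longrightarrow> 0 \<le> s \<Longrightarrow> poly q s \<noteq> 0"
  unfolding hurwitz_def using poly_map_poly_of_real[of q s]
  by (metis Re_complex_of_real not_le of_real_0)

lemma stable_rf_iff_hurwitz:
  "stable_rf r \<longleftrightarrow> (\<exists>p q. hurwitz q \<and> r = Fract p q \<and> degree p \<le> degree q)"
  unfolding stable_rf_def hurwitz_def using hurwitz_nonzero[unfolded hurwitz_def] by blast

lemma stable_rf_imp_proper_rf: "stable_rf r \<Longrightarrow> proper_rf r"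
  unfolding stable_rf_def proper_rf_def by blast

lemma stable_rf_0: "stable_rf 0"
  unfolding stable_rf_iff_hurwitz
  by (intro exI[of _ 0] exI[of _ 1]) (auto simp: hurwitz_1 Zero_fract_def)

lemma stable_rf_1: "stable_rf 1"
  unfolding stable_rf_iff_hurwitz
  by (intro exI[of _ 1] exI[of _ 1]) (auto simp: hurwitz_1 One_fract_def)

lemma proper_rf_0: "proper_rf 0"
  by (simp add: stable_rf_0 stable_rf_imp_proper_rf)

lemma stable_rf_add:
  assumes "stable_rf a" "stable_rf b"
  shows "stable_rf (a + b)"
proof -
  from assms obtain p1 q1 p2 q2
    where a: "hurwitz q1" "a = Fract p1 q1" "degree p1 \<le> degree q1"
      and b: "hurwitz q2" "b = Fract p2 q2" "degree p2 \<le> degree q2"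
    unfolding stable_rf_iff_hurwitz by blast
  have nz: "q1 \<noteq> 0" "q2 \<noteq> 0" using a b hurwitz_nonzero by auto
  have "a + b = Fract (p1 * q2 + p2 * q1) (q1 * q2)" using a b nz by simp
  moreover have "degree (p1 * q2 + p2 * q1) \<le> degree (q1 * q2)"
  proof -
    have "degree (p1 * q2) \<le> degree q1 + degree q2" using degree_mult_le[of p1 q2] a by linarith
    moreover have "degree (p2 * q1) \<le> degree q1 + degree q2" using degree_mult_le[of p2 q1] b
      by linarith
    ultimately show ?thesis using degree_add_le degree_mult_eq[OF nz] by metis
  qed
  ultimately show ?thesis
    unfolding stable_rf_iff_hurwitz using hurwitz_mult[OF a(1) b(1)] by blast
qed

lemma stable_rf_mult:
  assumes "stable_rf a" "stable_rf b"
  shows "stable_rf (a * b)"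
proof -
  from assms obtain p1 q1 p2 q2
    where a: "hurwitz q1" "a = Fract p1 q1" "degree p1 \<le> degree q1"
      and b: "hurwitz q2" "b = Fract p2 q2" "degree p2 \<le> degree q2"
    unfolding stable_rf_iff_hurwitz by blast
  have nz: "q1 \<noteq> 0" "q2 \<noteq> 0" using a b hurwitz_nonzero by auto
  have "a * b = Fract (p1 * p2) (q1 * q2)" using a b nz by simp
  moreover have "degree (p1 * p2) \<le> degree (q1 * q2)"
    using degree_mult_le[of p1 p2] a b degree_mult_eq[OF nz] by linarith
  ultimately show ?thesis
    unfolding stable_rf_iff_hurwitz using hurwitz_mult[OF a(1) b(1)] by blast
qed

lemma stable_rf_sum: "(\<And>x. x \<in> S \<Longrightarrow> stable_rf (f x)) \<Longrightarrow> stable_rf (sum f S)"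
  by (induction S rule: infinite_finite_induct) (auto intro: stable_rf_0 stable_rf_add)

text \<open>The value at \<open>s\<close> of any fraction representing \<open>x\<close> whose denominator does not vanish
  at \<open>s\<close>; it is junk if no such representation exists.\<close>
definition eval_rf :: "real \<Rightarrow> rfun \<Rightarrow> real" where
  "eval_rf s x = (SOME v. \<exists>p q. poly q s \<noteq> 0 \<and> x = Fract p q \<and> v = poly p s / poly q s)"

lemma eval_rf_Fract:
  assumes "poly q s \<noteq> 0"
  shows "eval_rf s (Fract p q) = poly p s / poly q s"
proof -
  have "\<exists>p' q'. poly q' s \<noteq> 0 \<and> Fract p q = Fract p' q' \<and>
      eval_rf s (Fract p q) = poly p' s / poly q' s"
    unfolding eval_rf_def by (rule someI_ex) (use assms in blast)
  then obtain p' q' where pq: "poly q' s \<noteq> 0" "Fract p q = Fract p' q'"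
      "eval_rf s (Fract p q) = poly p' s / poly q' s"
    by blast
  have "q \<noteq> 0" "q' \<noteq> 0" using assms pq(1) by auto
  then have "p * q' = p' * q" using pq(2) eq_fract(1) by blast
  then have "poly p s * poly q' s = poly p' s * poly q s" by (metis poly_mult)
  then show ?thesis using assms pq by (simp add: frac_eq_eq)
qed

lemma stable_rf_evaluable:
  assumes "stable_rf x" "0 \<le> s"
  obtains p q where "poly q s \<noteq> 0" "x = Fract p q"
  using assms poly_hurwitz_nonneg_nonzero unfolding stable_rf_iff_hurwitz by blast

lemma eval_rf_add:
  assumes "stable_rf x" "stable_rf y" "0 \<le> s"
  shows "eval_rf s (x + y) = eval_rf s x + eval_rf s y"
proof -
  obtain p1 q1 p2 q2 where "poly q1 s \<noteq> 0" "x = Fract p1 q1" "poly q2 s \<noteq> 0" "y = Fract p2 q2"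
    using stable_rf_evaluable assms by metis
  moreover from this have "q1 \<noteq> 0" "q2 \<noteq> 0" by auto
  ultimately show ?thesis by (simp add: eval_rf_Fract field_simps)
qed

lemma eval_rf_mult:
  assumes "stable_rf x" "stable_rf y" "0 \<le> s"
  shows "eval_rf s (x * y) = eval_rf s x * eval_rf s y"
proof -
  obtain p1 q1 p2 q2 where "poly q1 s \<noteq> 0" "x = Fract p1 q1" "poly q2 s \<noteq> 0" "y = Fract p2 q2"
    using stable_rf_evaluable assms by metis
  then show ?thesis by (simp add: eval_rf_Fract)
qed

lemma poly_nonzero_at_pos:
  assumes "p \<noteq> (0 :: real poly)"
  obtains s where "s > 0" "poly p s \<noteq> 0"
proof -
  have "\<not> {0 <..} \<subseteq> {s. poly p s = (0 :: real)}"
    using poly_roots_finite[OF assms] infinite_Ioi finite_subset by blast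
  then show ?thesis using that by auto
qed

lemma proper_feedback_gain:
  fixes k :: real
  assumes "proper_rf g"
  obtains h where "proper_rf h" "h * (1 + Fract [:k:] [:1, 1:] * g) = Fract [:k:] [:1, 1:]"
proof -
  obtain pg qg where qg: "qg \<noteq> 0" "g = Fract pg qg" "degree pg \<le> degree qg"
    using assms unfolding proper_rf_def by blast
  define D where "D = [:1, 1:] * qg + [:k:] * pg"
  have deg_qg: "degree ([:1, 1:] * qg) = degree qg + 1"
    using degree_mult_eq[OF _ qg(1), of "[:1, 1:]"] by simp
  moreover have "degree ([:k:] * pg) \<le> degree pg"
    using degree_mult_le[of "[:k:]" pg] by simp
  ultimately have degD: "degree D = degree qg + 1"
    unfolding D_def using qg(3) by (subst degree_add_eq_left) auto
  then have "D \<noteq> 0" by auto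
  define h where "h = Fract ([:k:] * qg) D"
  have proper: "proper_rf h"
    unfolding proper_rf_def h_def using \<open>D \<noteq> 0\<close> degD degree_mult_le[of "[:k:]" qg] by fastforce
  have qg1: "[:1, 1:] * qg \<noteq> 0" using qg(1) by (simp only: mult_eq_0_iff pCons_eq_0_iff) simp
  have "1 + Fract [:k:] [:1, 1:] * g = Fract D ([:1, 1:] * qg)"
    unfolding qg(2) D_def using qg1 by (simp only: mult_fract One_fract_def add_fract) simp
  moreover have "Fract ([:k:] * qg) D * Fract D ([:1, 1:] * qg) = Fract [:k:] [:1, 1:]"
  proof -
    have nz: "D * ([:1, 1:] * qg) \<noteq> 0" "[:1, 1 :: real:] \<noteq> 0" using \<open>D \<noteq> 0\<close> qg1 by simp_all
    have "[:k:] * qg * D * [:1, 1:] = [:k:] * (D * ([:1, 1:] * qg))" by (simp only: ac_simps)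
    then show ?thesis by (simp only: mult_fract eq_fract(1)[OF nz])
  qed
  ultimately show ?thesis
    using that proper unfolding h_def by simp
qed

lemma no_stable_fixpoint:
  assumes "stable_rf r" "stable_rf f" "stable_rf x" "0 \<le> s"
    and "eval_rf s r * eval_rf s f = 1"
  shows "x \<noteq> r + r * f * x"
proof
  assume "x = r + r * f * x"
  then have "eval_rf s x = eval_rf s r + eval_rf s r * eval_rf s f * eval_rf s x"
    using assms by (metis eval_rf_add eval_rf_mult stable_rf_mult)
  then have "eval_rf s r = 0" using assms(5) by simp
  then show False using assms(5) by simp
qed

lemma destabilizing_gain:
  assumes f: "stable_rf f" "f \<noteq> 0" and g: "stable_rf g"
  obtains h r where "proper_rf h" "stable_rf r" "r = h + h * g * r"
    "\<And>x. stable_rf x \<Longrightarrow> x \<noteq> h + h * (g + f) * x"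
proof -
  obtain pf qf where qf: "hurwitz qf" "f = Fract pf qf"
    using f unfolding stable_rf_iff_hurwitz by blast
  have "pf \<noteq> 0" using f(2) qf(2) fract_collapse(1) by blast
  then obtain s0 where s0: "s0 > 0" "poly pf s0 \<noteq> 0" using poly_nonzero_at_pos by blast
  have qf0: "poly qf s0 \<noteq> 0" using poly_hurwitz_nonneg_nonzero[OF qf(1)] s0 by simp
  define k where "k = (s0 + 1) * poly qf s0 / poly pf s0"
  define r where "r = Fract [:k:] [:1, 1:]"
  have r: "stable_rf r"
    unfolding r_def stable_rf_iff_hurwitz using hurwitz_linear by fastforce
  obtain h where h: "proper_rf h" "h * (1 + r * g) = r"
    using proper_feedback_gain[OF stable_rf_imp_proper_rf[OF g]] unfolding r_def by blast
  have eval_rf: "eval_rf s0 r * eval_rf s0 f = 1"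
    unfolding r_def qf(2) using s0 qf0 by (simp add: eval_rf_Fract k_def add_pos_pos)
  have no_fix: "x \<noteq> r + r * f * x" if "stable_rf x" for x
    using no_stable_fixpoint[OF r f(1) that _ eval_rf] s0 by simp
  have "x \<noteq> h + h * (g + f) * x" if "stable_rf x" for x
  proof
    assume fixpoint: "x = h + h * (g + f) * x"
    have "x * (1 + r * g) = (h + h * (g + f) * x) * (1 + r * g)"
      by (simp only: fixpoint[symmetric])
    also have "\<dots> = h * (1 + r * g) + h * (1 + r * g) * (g + f) * x"
      by (simp add: algebra_simps)
    finally have "x * (1 + r * g) = r + r * (g + f) * x"
      unfolding h(2) .
    then have "x = r + r * f * x" by (simp add: algebra_simps)
    then show False using no_fix[OF that] by blast
  qed
  moreover have "r = h + h * g * r" using h(2) by (simp add: algebra_simps)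
  ultimately show ?thesis using that h(1) r by blast
qed

lemma index_mult_mat_sum:
  "A \<in> carrier_mat n k \<Longrightarrow> B \<in> carrier_mat k m \<Longrightarrow> i < n \<Longrightarrow> j < m \<Longrightarrow>
   (A * B) $$ (i, j) = (\<Sum>l<k. A $$ (i, l) * B $$ (l, j))"
  by (simp add: scalar_prod_def atLeast0LessThan)

lemma mat_mult_add_distrib_left:
  "dim_col A = dim_row B \<Longrightarrow> dim_row B = dim_row C \<Longrightarrow> dim_col B = dim_col C \<Longrightarrow>
   A * (B + C) = A * B + A * (C :: 'a :: semiring_0 mat)"
  by (rule mult_add_distrib_mat[of _ "dim_row A" "dim_col A" _ "dim_col B"]) auto

lemma mat_add_mult_distrib_right:
  "dim_row A = dim_row B \<Longrightarrow> dim_col A = dim_col B \<Longrightarrow> dim_col A = dim_row C \<Longrightarrow>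
   (A + B) * C = A * C + B * (C :: 'a :: semiring_0 mat)"
  by (rule add_mult_distrib_mat[of _ "dim_row A" "dim_col A" _ _ "dim_col C"]) auto

lemma mat_mult_assoc:
  "dim_col A = dim_row B \<Longrightarrow> dim_col B = dim_row C \<Longrightarrow>
   A * B * C = A * (B * (C :: 'a :: semiring_0 mat))"
  by (rule assoc_mult_mat[of _ "dim_row A" "dim_col A" _ "dim_col B" _ "dim_col C"]) auto

lemmas mat_distrib_assoc = mat_mult_add_distrib_left mat_add_mult_distrib_right mat_mult_assoc

lemma mat_eq_add_of_add_uminus:
  "X \<in> carrier_mat r c \<Longrightarrow> Y \<in> carrier_mat r c \<Longrightarrow> X + - Y = Z \<Longrightarrow>
   X = Z + (Y :: 'a :: ab_group_add mat)"
  by (intro eq_matI) (auto dest!: arg_cong[of _ _ "\<lambda>M. M $$ (_, _)"] simp: algebra_simps)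

lemma mat_eq_add_of_uminus_add:
  "X \<in> carrier_mat r c \<Longrightarrow> Y \<in> carrier_mat r c \<Longrightarrow> - Y + X = Z \<Longrightarrow>
   X = Z + (Y :: 'a :: ab_group_add mat)"
  by (intro eq_matI) (auto dest!: arg_cong[of _ _ "\<lambda>M. M $$ (_, _)"] simp: algebra_simps)

lemma mat_add_uminus_of_eq_add:
  "A \<in> carrier_mat r c \<Longrightarrow> B \<in> carrier_mat r c \<Longrightarrow> Y = A + B \<Longrightarrow>
   Y + - B = (A :: 'a :: ab_group_add mat)"
  by (intro eq_matI) auto

lemma RHinf_mult:
  assumes "dim_col A = dim_row B" "RHinf A" "RHinf B"
  shows "RHinf (A * B)"
  unfolding RHinf_def
proof (intro allI impI)
  fix i j assume ij: "i < dim_row (A * B)" "j < dim_col (A * B)"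
  have "stable_rf (\<Sum>l < dim_col A. A $$ (i, l) * B $$ (l, j))"
    using assms ij by (auto simp: RHinf_def intro!: stable_rf_sum stable_rf_mult)
  then show "stable_rf ((A * B) $$ (i, j))"
    using ij assms(1) by (simp add: scalar_prod_def atLeast0LessThan)
qed

lemma RHinf_add: "dim_row A = dim_row B \<Longrightarrow> dim_col A = dim_col B \<Longrightarrow> RHinf A \<Longrightarrow> RHinf B \<Longrightarrow> RHinf (A + B)"
  by (auto simp: RHinf_def intro!: stable_rf_add)

lemma RHinf_one: "RHinf (1\<^sub>m n)"
  by (auto simp: RHinf_def stable_rf_0 stable_rf_1)

lemma RHinf_zero: "RHinf (0\<^sub>m n m)"
  by (auto simp: RHinf_def stable_rf_0)

lemma RHinf_four_block:
  "A \<in> carrier_mat r1 c1 \<Longrightarrow> B \<in> carrier_mat r1 c2 \<Longrightarrow> C \<in> carrier_mat r2 c1 \<Longrightarrow>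
   D \<in> carrier_mat r2 c2 \<Longrightarrow> RHinf A \<Longrightarrow> RHinf B \<Longrightarrow> RHinf C \<Longrightarrow> RHinf D \<Longrightarrow>
   RHinf (four_block_mat A B C D)"
  unfolding RHinf_def by auto

lemma four_block_mat_mult_eq_one:
  assumes "A1 \<in> carrier_mat n n" "B1 \<in> carrier_mat n m" "C1 \<in> carrier_mat m n" "D1 \<in> carrier_mat m m"
    and "A2 \<in> carrier_mat n n" "B2 \<in> carrier_mat n m" "C2 \<in> carrier_mat m n" "D2 \<in> carrier_mat m m"
    and "A1 * A2 + B1 * C2 = 1\<^sub>m n" "A1 * B2 + B1 * D2 = 0\<^sub>m n m"
      "C1 * A2 + D1 * C2 = 0\<^sub>m m n" "C1 * B2 + D1 * D2 = 1\<^sub>m m"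
  shows "four_block_mat A1 B1 C1 D1 * four_block_mat A2 B2 C2 D2
    = (1\<^sub>m (n + m) :: 'a :: semiring_1 mat)"
  using assms by (simp add: mult_four_block_mat)

definition submat :: "'a mat \<Rightarrow> nat \<Rightarrow> nat \<Rightarrow> nat \<Rightarrow> nat \<Rightarrow> 'a mat" where
  "submat A r0 nr c0 nc = mat nr nc (\<lambda>(i, j). A $$ (i + r0, j + c0))"

lemma submat_carrier [simp]: "submat A r0 nr c0 nc \<in> carrier_mat nr nc"
  and dim_submat [simp]: "dim_row (submat A r0 nr c0 nc) = nr" "dim_col (submat A r0 nr c0 nc) = nc"
  by (auto simp: submat_def)

lemma index_submat [simp]:
  "i < nr \<Longrightarrow> j < nc \<Longrightarrow> submat A r0 nr c0 nc $$ (i, j) = A $$ (i + r0, j + c0)"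
  by (simp add: submat_def)

lemma RHinf_submat:
  "RHinf A \<Longrightarrow> A \<in> carrier_mat m n \<Longrightarrow> r0 + nr \<le> m \<Longrightarrow> c0 + nc \<le> n \<Longrightarrow> RHinf (submat A r0 nr c0 nc)"
  by (auto simp: RHinf_def)

lemma submat_add:
  "A \<in> carrier_mat m n \<Longrightarrow> B \<in> carrier_mat m n \<Longrightarrow> r0 + nr \<le> m \<Longrightarrow> c0 + nc \<le> n \<Longrightarrow>
   submat (A + B) r0 nr c0 nc = submat A r0 nr c0 nc + submat B r0 nr c0 nc"
  by (intro eq_matI) auto

lemma sum_lessThan_add_split: "(\<Sum>l < (a :: nat) + b. f l) = (\<Sum>l<a. f l) + (\<Sum>l<b. f (a + l))"
  by (induction b) (auto simp: add_ac)

lemma submat_mult3: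
  assumes A: "A \<in> carrier_mat m (k1 + k2 + k3)" and B: "B \<in> carrier_mat (k1 + k2 + k3) n"
    and "r0 + nr \<le> m" "c0 + nc \<le> n"
  shows "submat (A * B) r0 nr c0 nc =
      submat A r0 nr 0 k1 * submat B 0 k1 c0 nc + submat A r0 nr k1 k2 * submat B k1 k2 c0 nc
    + submat A r0 nr (k1 + k2) k3 * submat B (k1 + k2) k3 c0 nc" (is "_ = ?R")
proof (rule eq_matI)
  fix i j assume "i < dim_row ?R" "j < dim_col ?R"
  then have ij: "i < nr" "j < nc" by auto
  have "submat (A * B) r0 nr c0 nc $$ (i, j)
    = (\<Sum>l < k1 + k2 + k3. A $$ (i + r0, l) * B $$ (l, j + c0))"
    using ij assms by (simp add: scalar_prod_def atLeast0LessThan)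
  also have "\<dots> = (\<Sum>l<k1. A $$ (i + r0, l) * B $$ (l, j + c0))
      + (\<Sum>l<k2. A $$ (i + r0, k1 + l) * B $$ (k1 + l, j + c0))
      + (\<Sum>l<k3. A $$ (i + r0, k1 + k2 + l) * B $$ (k1 + k2 + l, j + c0))"
    by (simp add: sum_lessThan_add_split add_ac)
  also have "\<dots> = ?R $$ (i, j)"
    using ij by (simp add: scalar_prod_def atLeast0LessThan add_ac)
  finally show "submat (A * B) r0 nr c0 nc $$ (i, j) = ?R $$ (i, j)" .
qed auto

lemma submat_four_block:
  assumes "A \<in> carrier_mat r1 c1" "B \<in> carrier_mat r1 c2" "C \<in> carrier_mat r2 c1" "D \<in> carrier_mat r2 c2"
  shows "submat (four_block_mat A B C D) 0 r1 0 c1 = A" "submat (four_block_mat A B C D) 0 r1 c1 c2 = B"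
    "submat (four_block_mat A B C D) r1 r2 0 c1 = C" "submat (four_block_mat A B C D) r1 r2 c1 c2 = D"
  using assms by (auto intro!: eq_matI)

lemma four_block_mat_inject:
  assumes "X1 \<in> carrier_mat ra ca" "X2 \<in> carrier_mat ra cb" "X3 \<in> carrier_mat rb ca" "X4 \<in> carrier_mat rb cb"
    and "Y1 \<in> carrier_mat ra ca" "Y2 \<in> carrier_mat ra cb" "Y3 \<in> carrier_mat rb ca" "Y4 \<in> carrier_mat rb cb"
    and "four_block_mat X1 X2 X3 X4 = four_block_mat Y1 Y2 Y3 Y4"
  shows "X1 = Y1" "X2 = Y2" "X3 = Y3" "X4 = Y4"
  using submat_four_block[OF assms(1-4)] submat_four_block[OF assms(5-8)] assms(9) by metis+

lemma four_block_submat: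
  assumes "B \<in> carrier_mat (n + m) (n + m)"
  shows "B = four_block_mat (submat B 0 n 0 n) (submat B 0 n n m) (submat B n m 0 n) (submat B n m n m)"
    (is "B = ?F")
proof (rule eq_matI)
  fix i j assume "i < dim_row ?F" "j < dim_col ?F"
  then show "B $$ (i, j) = ?F $$ (i, j)" by auto
qed (use assms in auto)

context
  fixes A11 A12 A13 A21 A22 A23 A31 A32 A33 :: tfm and r1 r2 r3 c1 c2 c3 :: nat
  assumes blocks: "A11 \<in> carrier_mat r1 c1" "A12 \<in> carrier_mat r1 c2" "A13 \<in> carrier_mat r1 c3"
    "A21 \<in> carrier_mat r2 c1" "A22 \<in> carrier_mat r2 c2" "A23 \<in> carrier_mat r2 c3"
    "A31 \<in> carrier_mat r3 c1" "A32 \<in> carrier_mat r3 c2" "A33 \<in> carrier_mat r3 c3"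
begin

lemma blk3_carrier:
  "blk3 A11 A12 A13 A21 A22 A23 A31 A32 A33 \<in> carrier_mat (r1 + r2 + r3) (c1 + c2 + c3)"
  using blocks unfolding blk3_def by auto

lemma index_blk3:
  assumes "i < r1 + r2 + r3" "j < c1 + c2 + c3"
  shows "blk3 A11 A12 A13 A21 A22 A23 A31 A32 A33 $$ (i, j) =
    (if i < r1 then
       (if j < c1 then A11 $$ (i, j) else
         if j < c1 + c2 then A12 $$ (i, j - c1) else A13 $$ (i, j - c1 - c2))
     else if i < r1 + r2 then
       (if j < c1 then A21 $$ (i - r1, j) else if j < c1 + c2 then A22 $$ (i - r1, j - c1)
        else A23 $$ (i - r1, j - c1 - c2))
     else
       (if j < c1 then A31 $$ (i - r1 - r2, j) else if j < c1 + c2 then A32 $$ (i - r1 - r2, j - c1)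
        else A33 $$ (i - r1 - r2, j - c1 - c2)))"
  using blocks assms unfolding blk3_def by (auto simp: diff_diff_add)

lemma submat_blk3:
  "submat (blk3 A11 A12 A13 A21 A22 A23 A31 A32 A33) 0 r1 0 c1 = A11"
  "submat (blk3 A11 A12 A13 A21 A22 A23 A31 A32 A33) 0 r1 c1 c2 = A12"
  "submat (blk3 A11 A12 A13 A21 A22 A23 A31 A32 A33) 0 r1 (c1 + c2) c3 = A13"
  "submat (blk3 A11 A12 A13 A21 A22 A23 A31 A32 A33) r1 r2 0 c1 = A21"
  "submat (blk3 A11 A12 A13 A21 A22 A23 A31 A32 A33) r1 r2 c1 c2 = A22"
  "submat (blk3 A11 A12 A13 A21 A22 A23 A31 A32 A33) r1 r2 (c1 + c2) c3 = A23"
  "submat (blk3 A11 A12 A13 A21 A22 A23 A31 A32 A33) (r1 + r2) r3 0 c1 = A31"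
  "submat (blk3 A11 A12 A13 A21 A22 A23 A31 A32 A33) (r1 + r2) r3 c1 c2 = A32"
  "submat (blk3 A11 A12 A13 A21 A22 A23 A31 A32 A33) (r1 + r2) r3 (c1 + c2) c3 = A33"
  using blocks by (auto intro!: eq_matI simp: index_blk3)

lemma RHinf_blk3:
  assumes "RHinf A11" "RHinf A12" "RHinf A13" "RHinf A21" "RHinf A22" "RHinf A23"
    "RHinf A31" "RHinf A32" "RHinf A33"
  shows "RHinf (blk3 A11 A12 A13 A21 A22 A23 A31 A32 A33)"
  unfolding RHinf_def
proof (intro allI impI)
  fix i j
  assume "i < dim_row (blk3 A11 A12 A13 A21 A22 A23 A31 A32 A33)"
    "j < dim_col (blk3 A11 A12 A13 A21 A22 A23 A31 A32 A33)"
  then have ij: "i < r1 + r2 + r3" "j < c1 + c2 + c3" using blk3_carrier by auto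
  show "stable_rf (blk3 A11 A12 A13 A21 A22 A23 A31 A32 A33 $$ (i, j))"
    unfolding index_blk3[OF ij] using blocks assms ij unfolding RHinf_def by auto
qed

end

lemma blk3_eq_matI:
  assumes "A \<in> carrier_mat (r1 + r2 + r3) (c1 + c2 + c3)"
    "B \<in> carrier_mat (r1 + r2 + r3) (c1 + c2 + c3)"
    and blocks_eq: "\<And>ra na cb nb. (ra, na) \<in> {(0, r1), (r1, r2), (r1 + r2, r3)} \<Longrightarrow>
      (cb, nb) \<in> {(0, c1), (c1, c2), (c1 + c2, c3)} \<Longrightarrow> submat A ra na cb nb = submat B ra na cb nb"
  shows "A = B"
proof (rule eq_matI)
  fix i j assume "i < dim_row B" "j < dim_col B"
  then have ij: "i < r1 + r2 + r3" "j < c1 + c2 + c3" using assms by auto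
  have segment: "\<exists>(s, n) \<in> {(0, a1), (a1, a2), (a1 + a2, a3)}. s \<le> x \<and> x < s + n"
    if "x < a1 + a2 + a3" for x a1 a2 a3 :: nat
    using that by (cases "x < a1"; cases "x < a1 + a2") auto
  obtain ra na where ra: "(ra, na) \<in> {(0, r1), (r1, r2), (r1 + r2, r3)}" "ra \<le> i" "i < ra + na"
    using segment[OF ij(1)] by blast
  obtain cb nb where cb: "(cb, nb) \<in> {(0, c1), (c1, c2), (c1 + c2, c3)}" "cb \<le> j" "j < cb + nb"
    using segment[OF ij(2)] by blast
  have "submat A ra na cb nb $$ (i - ra, j - cb) = submat B ra na cb nb $$ (i - ra, j - cb)"
    using blocks_eq[OF ra(1) cb(1)] by simp
  then show "A $$ (i, j) = B $$ (i, j)" using ra cb by simp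
qed (use assms in auto)

definition single_entry_mat :: "nat \<Rightarrow> nat \<Rightarrow> nat \<Rightarrow> nat \<Rightarrow> 'a :: zero \<Rightarrow> 'a mat" where
  "single_entry_mat p q j i x = mat p q (\<lambda>(a, b). if a = j \<and> b = i then x else 0)"

lemma single_entry_mat_carrier [simp]: "single_entry_mat p q j i x \<in> carrier_mat p q"
  by (simp add: single_entry_mat_def)

lemma dim_single_entry_mat [simp]:
  "dim_row (single_entry_mat p q j i x) = p" "dim_col (single_entry_mat p q j i x) = q"
  by (simp_all add: single_entry_mat_def)

lemma index_single_entry_mat [simp]:
  "a < p \<Longrightarrow> b < q \<Longrightarrow> single_entry_mat p q j i x $$ (a, b) = (if a = j \<and> b = i then x else 0)"
  by (simp add: single_entry_mat_def)

lemma single_entry_mat_add: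
  "single_entry_mat p q j i x + single_entry_mat p q j i y
    = single_entry_mat p q j i (x + y :: 'a :: monoid_add)"
  unfolding single_entry_mat_def by (intro eq_matI) auto

lemma single_entry_mat_mult:
  assumes M: "M \<in> carrier_mat q n" and "i < q"
  shows "single_entry_mat p q j i x * M
    = mat p n (\<lambda>(a, c). if a = j then x * M $$ (i, c) else (0 :: 'a :: comm_ring_1))"
proof (rule eq_matI)
  fix a c assume "a < dim_row (mat p n (\<lambda>(a, c). if a = j then x * M $$ (i, c) else 0))"
    "c < dim_col (mat p n (\<lambda>(a, c). if a = j then x * M $$ (i, c) else 0))"
  then have ac: "a < p" "c < n" by auto
  have "(single_entry_mat p q j i x * M) $$ (a, c)
    = (\<Sum>b<q. single_entry_mat p q j i x $$ (a, b) * M $$ (b, c))"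
    using ac M by (intro index_mult_mat_sum) auto
  also have "\<dots> = (\<Sum>b<q. if b = i then (if a = j then x * M $$ (i, c) else 0) else 0)"
    using ac by (intro sum.cong) auto
  finally show "(single_entry_mat p q j i x * M) $$ (a, c)
    = mat p n (\<lambda>(a, c). if a = j then x * M $$ (i, c) else 0) $$ (a, c)"
    using ac assms by (simp add: sum.delta)
qed (use M in auto)

lemma single_entry_mat_mult_mult:
  assumes "M \<in> carrier_mat q p" "j < p" "i < q"
  shows "single_entry_mat p q j i x * M * single_entry_mat p q j i y
    = single_entry_mat p q j i (x * M $$ (i, j) * (y :: 'a :: comm_ring_1))"
proof (rule eq_matI)
  fix a b assume "a < dim_row (single_entry_mat p q j i (x * M $$ (i, j) * y))"
    "b < dim_col (single_entry_mat p q j i (x * M $$ (i, j) * y))"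
  then have ab: "a < p" "b < q" by simp_all
  have "(single_entry_mat p q j i x * M * single_entry_mat p q j i y) $$ (a, b)
      = (\<Sum>c<p. (if a = j then x * M $$ (i, c) else 0) * single_entry_mat p q j i y $$ (c, b))"
    using ab assms by (simp add: single_entry_mat_mult scalar_prod_def atLeast0LessThan)
  also have "\<dots> = (\<Sum>c<p. if c = j then (if a = j \<and> b = i then x * M $$ (i, j) * y else 0) else 0)"
    using ab by (intro sum.cong) auto
  finally show "(single_entry_mat p q j i x * M * single_entry_mat p q j i y) $$ (a, b)
    = single_entry_mat p q j i (x * M $$ (i, j) * y) $$ (a, b)"
    using ab assms by (simp add: sum.delta)
qed simp_all

text \<open>In \<open>X = E + E A X\<close> with \<open>E\<close> supported at \<open>(j, i)\<close>, column \<open>i\<close> of \<open>X\<close> vanishes off row \<open>j\<close>,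
  so the entry \<open>X $$ (j, i)\<close> satisfies a scalar feedback equation.\<close>
lemma single_entry_fixpoint:
  fixes h :: "'a :: comm_ring_1"
  assumes A: "A \<in> carrier_mat q p" and X: "X \<in> carrier_mat p q" and ij: "j < p" "i < q"
    and fixpoint: "X = single_entry_mat p q j i h + single_entry_mat p q j i h * (A * X)"
  shows "X $$ (j, i) = h + h * A $$ (i, j) * X $$ (j, i)"
proof -
  define M where "M = A * X"
  have M: "M \<in> carrier_mat q q" unfolding M_def using A X by auto
  have X_eq: "X = single_entry_mat p q j i h
    + mat p q (\<lambda>(a, c). if a = j then h * M $$ (i, c) else 0)"
    using fixpoint unfolding M_def[symmetric] single_entry_mat_mult[OF M ij(2)] .
  have X_entry: "X $$ (a, b)
    = (if a = j \<and> b = i then h else 0) + (if a = j then h * M $$ (i, b) else 0)"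
    if "a < p" "b < q" for a b
    using that by (subst X_eq) simp
  have col_i: "X $$ (d, i) = 0" if "d < p" "d \<noteq> j" for d
    using X_entry[OF that(1) ij(2)] that(2) by simp
  have "M $$ (i, i) = (\<Sum>d<p. A $$ (i, d) * X $$ (d, i))"
    unfolding M_def using A X ij by (intro index_mult_mat_sum) auto
  also have "\<dots> = (\<Sum>d<p. if d = j then A $$ (i, j) * X $$ (j, i) else 0)"
    by (intro sum.cong) (auto simp: col_i)
  also have "\<dots> = A $$ (i, j) * X $$ (j, i)"
    using ij by simp
  finally show ?thesis using X_entry[OF ij] by (simp add: mult.assoc)
qed

lemma int_stableI:
  assumes H: "H \<in> carrier_mat n m" and C: "C \<in> carrier_mat m n" and B: "B \<in> carrier_mat (n + m) (n + m)"
    and MB: "four_block_mat (1\<^sub>m n) (- H) (- C) (1\<^sub>m m) * B = 1\<^sub>m (n + m)" and s: "RHinf B"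
  shows "int_stable H C"
proof -
  let ?M = "four_block_mat (1\<^sub>m n) (- H) (- C) (1\<^sub>m m)"
  have M: "?M \<in> carrier_mat (n + m) (n + m)" using H C by auto
  have BM: "B * ?M = 1\<^sub>m (n + m)" using mat_mult_left_right_inverse[OF M B MB] .
  show ?thesis unfolding int_stable_def Let_def inverts_mat_def using H C B M MB BM s
    by (intro conjI exI[of _ B]) auto
qed

lemma int_stableE:
  assumes H: "H \<in> carrier_mat n m" and st: "int_stable H C"
  obtains B where "B \<in> carrier_mat (n + m) (n + m)" "C \<in> carrier_mat m n"
    "four_block_mat (1\<^sub>m n) (- H) (- C) (1\<^sub>m m) * B = 1\<^sub>m (n + m)"
    "B * four_block_mat (1\<^sub>m n) (- H) (- C) (1\<^sub>m m) = 1\<^sub>m (n + m)" "RHinf B"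
proof -
  from st H have C: "C \<in> carrier_mat m n" unfolding int_stable_def by auto
  let ?M = "four_block_mat (1\<^sub>m n) (- H) (- C) (1\<^sub>m m)"
  from st H obtain B where MB: "?M * B = 1\<^sub>m (n + m)" and BM: "B * ?M = 1\<^sub>m (dim_row B)"
    and s: "RHinf B"
    unfolding int_stable_def Let_def inverts_mat_def by auto
  have "dim_col B = n + m" using arg_cong[OF MB, of dim_col] by simp
  moreover have "dim_row B = n + m" using arg_cong[OF BM, of dim_col] C H by simp
  ultimately have Bc: "B \<in> carrier_mat (n + m) (n + m)" by auto
  show ?thesis using that[OF Bc C MB _ s] BM Bc by auto
qed

lemma int_stable_of_stable_plant:
  assumes G: "G \<in> carrier_mat n m" and C: "C \<in> carrier_mat m n" and sG: "RHinf G"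
    and W: "W \<in> carrier_mat m n" and sW: "RHinf W" and eq: "W = C + C * G * W"
  shows "int_stable G C"
proof -
  let ?B = "four_block_mat (1\<^sub>m n + G * W) (G + G * W * G) W (1\<^sub>m m + W * G)"
  have B: "?B \<in> carrier_mat (n + m) (n + m)" using G W by auto
  have eq': "W = C + C * (G * W)" using eq G C W by simp
  have e1: "1\<^sub>m n * (1\<^sub>m n + G * W) + - G * W = 1\<^sub>m n"
    using G W by (intro eq_matI) auto
  have e2: "1\<^sub>m n * (G + G * W * G) + - G * (1\<^sub>m m + W * G) = 0\<^sub>m n m"
  proof -
    have d: "G * (1\<^sub>m m + W * G) = G + G * (W * G)"
      using G W by (subst mult_add_distrib_mat[of _ n m]) auto
    have "1\<^sub>m n * (G + G * W * G) + - G * (1\<^sub>m m + W * G) = (G + G * (W * G)) + - (G + G * (W * G))"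
      using G W by (simp add: d)
    also have "\<dots> = 0\<^sub>m n m" using G W by (intro eq_matI) auto
    finally show ?thesis .
  qed
  have e3: "- C * (1\<^sub>m n + G * W) + 1\<^sub>m m * W = 0\<^sub>m m n"
  proof -
    have "- C * (1\<^sub>m n + G * W) + 1\<^sub>m m * W = - (C + C * (G * W)) + W"
      using G W C by (simp add: mat_distrib_assoc; (intro eq_matI; auto)?)
    also have "\<dots> = - W + W" using eq' by simp
    also have "\<dots> = 0\<^sub>m m n" using W by (intro eq_matI) auto
    finally show ?thesis .
  qed
  have e4: "- C * (G + G * W * G) + 1\<^sub>m m * (1\<^sub>m m + W * G) = 1\<^sub>m m"
  proof -
    have "- C * (G + G * W * G) + 1\<^sub>m m * (1\<^sub>m m + W * G)
      = - ((C + C * (G * W)) * G) + (1\<^sub>m m + W * G)"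
      using G W C by (simp add: mat_distrib_assoc; (intro eq_matI; auto)?)
    also have "\<dots> = - (W * G) + (1\<^sub>m m + W * G)" using eq' by simp
    also have "\<dots> = 1\<^sub>m m" using W G by (intro eq_matI) auto
    finally show ?thesis .
  qed
  have "four_block_mat (1\<^sub>m n) (- G) (- C) (1\<^sub>m m) * ?B = 1\<^sub>m (n + m)"
    using G W C by (intro four_block_mat_mult_eq_one e1 e2 e3 e4) auto
  moreover have "RHinf ?B" using G W sG sW
    by (intro RHinf_four_block[of _ n n _ m _ m] RHinf_add RHinf_mult RHinf_one) auto
  ultimately show ?thesis using int_stableI[OF G C B] by blast
qed

lemma int_stable_of_stable_controller:
  assumes H: "H \<in> carrier_mat n m" and C: "C \<in> carrier_mat m n" and sC: "RHinf C"
    and W: "W \<in> carrier_mat n m" and sW: "RHinf W" and eq: "W = H + H * C * W"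
  shows "int_stable H C"
proof -
  let ?B = "four_block_mat (1\<^sub>m n + W * C) W (C + C * W * C) (1\<^sub>m m + C * W)"
  have B: "?B \<in> carrier_mat (n + m) (n + m)" using C W by auto
  have eq': "W = H + H * (C * W)" using eq H C W by simp
  have WC: "W * C = H * C + H * (C * (W * C))"
  proof -
    have "W * C = (H + H * (C * W)) * C" using eq' by simp
    also have "\<dots> = H * C + H * (C * (W * C))" using H C W
      by (simp add: mat_distrib_assoc; (intro eq_matI; auto)?)
    finally show ?thesis .
  qed
  have e1: "1\<^sub>m n * (1\<^sub>m n + W * C) + - H * (C + C * W * C) = 1\<^sub>m n"
  proof -
    have "1\<^sub>m n * (1\<^sub>m n + W * C) + - H * (C + C * W * C)
      = (1\<^sub>m n + W * C) + - (H * C + H * (C * (W * C)))"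
      using H W C by (simp add: mat_distrib_assoc; (intro eq_matI; auto)?)
    also have "\<dots> = (1\<^sub>m n + W * C) + - (W * C)" unfolding WC[symmetric] ..
    also have "\<dots> = 1\<^sub>m n" using W C by (intro eq_matI) auto
    finally show ?thesis .
  qed
  have e2: "1\<^sub>m n * W + - H * (1\<^sub>m m + C * W) = 0\<^sub>m n m"
  proof -
    have "1\<^sub>m n * W + - H * (1\<^sub>m m + C * W) = W + - (H + H * (C * W))"
      using H W C by (simp add: mat_distrib_assoc; (intro eq_matI; auto)?)
    also have "\<dots> = W + - W" unfolding eq'[symmetric] ..
    also have "\<dots> = 0\<^sub>m n m" using W by (intro eq_matI) auto
    finally show ?thesis .
  qed
  have e3: "- C * (1\<^sub>m n + W * C) + 1\<^sub>m m * (C + C * W * C) = 0\<^sub>m m n"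
    using H W C by (simp add: mat_distrib_assoc; (intro eq_matI; auto)?)
  have e4: "- C * W + 1\<^sub>m m * (1\<^sub>m m + C * W) = 1\<^sub>m m"
    using H W C by (simp add: mat_distrib_assoc; (intro eq_matI; auto)?)
  have "four_block_mat (1\<^sub>m n) (- H) (- C) (1\<^sub>m m) * ?B = 1\<^sub>m (n + m)"
    using H W C by (intro four_block_mat_mult_eq_one e1 e2 e3 e4) auto
  moreover have "RHinf ?B" using C W sC sW
    by (intro RHinf_four_block[of _ n n _ m _ m] RHinf_add RHinf_mult RHinf_one) auto
  ultimately show ?thesis using int_stableI[OF H C B] by blast
qed

lemma feedback_right_inverse_blocks:
  fixes H C B11 B12 B21 B22 :: "'a :: comm_ring_1 mat"
  assumes H: "H \<in> carrier_mat n m" and C: "C \<in> carrier_mat m n"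
    and c: "B11 \<in> carrier_mat n n" "B12 \<in> carrier_mat n m" "B21 \<in> carrier_mat m n" "B22 \<in> carrier_mat m m"
    and inv: "four_block_mat (1\<^sub>m n) (- H) (- C) (1\<^sub>m m) * four_block_mat B11 B12 B21 B22 = 1\<^sub>m (n + m)"
  shows "B11 = 1\<^sub>m n + H * B21" "B21 = C * B11" "B12 = H * B22" "B22 = 1\<^sub>m m + C * B12"
proof -
  have "four_block_mat (1\<^sub>m n * B11 + - H * B21) (1\<^sub>m n * B12 + - H * B22)
      (- C * B11 + 1\<^sub>m m * B21) (- C * B12 + 1\<^sub>m m * B22)
    = four_block_mat (1\<^sub>m n) (0\<^sub>m n m) (0\<^sub>m m n) (1\<^sub>m m)"
    using inv H C c by (subst (asm) mult_four_block_mat[of _ n n _ m _ m _ _ n _ m]) auto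
  note blocks = four_block_mat_inject[where ra = n and ca = n and cb = m and rb = m, OF _ _ _ _ _ _ _ _ this]
  have e: "B11 + - (H * B21) = 1\<^sub>m n" "- (C * B11) + B21 = 0\<^sub>m m n"
    "B12 + - (H * B22) = 0\<^sub>m n m" "- (C * B12) + B22 = 1\<^sub>m m"
    using H C c blocks by simp_all
  have HB: "H * B21 \<in> carrier_mat n n" "C * B11 \<in> carrier_mat m n" "H * B22 \<in> carrier_mat n m"
    "C * B12 \<in> carrier_mat m m"
    using c H C by auto
  show "B11 = 1\<^sub>m n + H * B21" by (rule mat_eq_add_of_add_uminus[OF c(1) HB(1) e(1)])
  show "B21 = C * B11" using mat_eq_add_of_uminus_add[OF c(3) HB(2) e(2)] HB(2) by simp
  show "B12 = H * B22" using mat_eq_add_of_add_uminus[OF c(2) HB(3) e(3)] HB(3) by simp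
  show "B22 = 1\<^sub>m m + C * B12" by (rule mat_eq_add_of_uminus_add[OF c(4) HB(4) e(4)])
qed

lemma feedback_left_inverse_blocks:
  fixes H C B11 B12 B21 B22 :: "'a :: comm_ring_1 mat"
  assumes H: "H \<in> carrier_mat n m" and C: "C \<in> carrier_mat m n"
    and c: "B11 \<in> carrier_mat n n" "B12 \<in> carrier_mat n m" "B21 \<in> carrier_mat m n" "B22 \<in> carrier_mat m m"
    and inv: "four_block_mat B11 B12 B21 B22 * four_block_mat (1\<^sub>m n) (- H) (- C) (1\<^sub>m m) = 1\<^sub>m (n + m)"
  shows "B21 = B22 * C" "B22 = 1\<^sub>m m + B21 * H"
proof -
  have "four_block_mat (B11 * 1\<^sub>m n + B12 * - C) (B11 * - H + B12 * 1\<^sub>m m)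
      (B21 * 1\<^sub>m n + B22 * - C) (B21 * - H + B22 * 1\<^sub>m m)
    = four_block_mat (1\<^sub>m n) (0\<^sub>m n m) (0\<^sub>m m n) (1\<^sub>m m)"
    using inv H C c by (subst (asm) mult_four_block_mat[of _ n n _ m _ m _ _ n _ m]) auto
  note blocks = four_block_mat_inject[where ra = n and ca = n and cb = m and rb = m, OF _ _ _ _ _ _ _ _ this]
  have e: "B21 + - (B22 * C) = 0\<^sub>m m n" "- (B21 * H) + B22 = 1\<^sub>m m"
    using H C c blocks by simp_all
  have HB: "B22 * C \<in> carrier_mat m n" "B21 * H \<in> carrier_mat m m" using c H C by auto
  show "B21 = B22 * C" using mat_eq_add_of_add_uminus[OF c(3) HB(1) e(1)] HB(1) by simp
  show "B22 = 1\<^sub>m m + B21 * H" by (rule mat_eq_add_of_uminus_add[OF c(4) HB(2) e(2)])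
qed

lemma int_stable_inverse_blocks:
  assumes H: "H \<in> carrier_mat n m" and st: "int_stable H C"
  obtains B11 B12 B21 B22 where "C \<in> carrier_mat m n"
    "B11 \<in> carrier_mat n n" "B12 \<in> carrier_mat n m" "B21 \<in> carrier_mat m n" "B22 \<in> carrier_mat m m"
    "RHinf B12" "RHinf B21"
    "B11 = 1\<^sub>m n + H * B21" "B21 = C * B11" "B12 = H * B22" "B22 = 1\<^sub>m m + C * B12"
    "B21 = B22 * C" "B22 = 1\<^sub>m m + B21 * H"
proof -
  obtain B where B: "B \<in> carrier_mat (n + m) (n + m)" and C: "C \<in> carrier_mat m n"
    and MB: "four_block_mat (1\<^sub>m n) (- H) (- C) (1\<^sub>m m) * B = 1\<^sub>m (n + m)"
    and BM: "B * four_block_mat (1\<^sub>m n) (- H) (- C) (1\<^sub>m m) = 1\<^sub>m (n + m)" and s: "RHinf B"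
    using int_stableE[OF H st] by blast
  define B11 where "B11 = submat B 0 n 0 n"
  define B12 where "B12 = submat B 0 n n m"
  define B21 where "B21 = submat B n m 0 n"
  define B22 where "B22 = submat B n m n m"
  have c: "B11 \<in> carrier_mat n n" "B12 \<in> carrier_mat n m" "B21 \<in> carrier_mat m n" "B22 \<in> carrier_mat m m"
    unfolding B11_def B12_def B21_def B22_def by auto
  have BB: "B = four_block_mat B11 B12 B21 B22"
    unfolding B11_def B12_def B21_def B22_def using four_block_submat[OF B] .
  have "RHinf B12" "RHinf B21"
    unfolding B12_def B21_def using RHinf_submat[OF s B] by auto
  then show ?thesis
    using that C c feedback_right_inverse_blocks[OF H C c MB[unfolded BB]]
      feedback_left_inverse_blocks[OF H C c BM[unfolded BB]]
    by blast
qed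

lemma int_stable_controller_loop:
  assumes H: "H \<in> carrier_mat n m" and st: "int_stable H C"
  obtains W where "W \<in> carrier_mat m n" "C \<in> carrier_mat m n" "RHinf W"
    "W = C + C * H * W" "W = C + W * H * C"
proof -
  obtain B11 B12 B21 B22 where C: "C \<in> carrier_mat m n"
    and c: "B11 \<in> carrier_mat n n" "B21 \<in> carrier_mat m n" "B22 \<in> carrier_mat m m"
    and s: "RHinf B21"
    and eqs: "B11 = 1\<^sub>m n + H * B21" "B21 = C * B11" "B21 = B22 * C" "B22 = 1\<^sub>m m + B21 * H"
    by (rule int_stable_inverse_blocks[OF H st]) blast
  have "B21 = C * (1\<^sub>m n + H * B21)" using eqs(1,2) by simp
  also have "\<dots> = C + C * H * B21" using c C H
    by (simp add: mat_distrib_assoc; (intro eq_matI; auto)?)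
  finally have "B21 = C + C * H * B21" .
  moreover have "B21 = (1\<^sub>m m + B21 * H) * C" using eqs(3,4) by simp
  then have "B21 = C + B21 * H * C" using c C H
    by (simp add: mat_distrib_assoc; (intro eq_matI; auto)?)
  ultimately show ?thesis using that c C s by blast
qed

lemma int_stable_plant_loop:
  assumes H: "H \<in> carrier_mat n m" and st: "int_stable H C"
  obtains R where "R \<in> carrier_mat n m" "C \<in> carrier_mat m n" "RHinf R" "R = H + H * C * R"
proof -
  obtain B11 B12 B21 B22 where C: "C \<in> carrier_mat m n" and c: "B12 \<in> carrier_mat n m"
    and s: "RHinf B12" and eqs: "B12 = H * B22" "B22 = 1\<^sub>m m + C * B12"
    by (rule int_stable_inverse_blocks[OF H st]) blast
  have "B12 = H * (1\<^sub>m m + C * B12)" using eqs by simp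
  also have "\<dots> = H + H * C * B12" using c C H
    by (simp add: mat_distrib_assoc; (intro eq_matI; auto)?)
  finally show ?thesis using that c C s by blast
qed

locale retrofit_setting =
  fixes nw nz ny nv nd nu :: nat
    and Gwv Gwd Gwu Gzv Gzd Gzu Gyv Gyd Gyu K :: tfm
  assumes dims: "Gwv \<in> carrier_mat nw nv" "Gwd \<in> carrier_mat nw nd" "Gwu \<in> carrier_mat nw nu"
    "Gzv \<in> carrier_mat nz nv" "Gzd \<in> carrier_mat nz nd" "Gzu \<in> carrier_mat nz nu"
    "Gyv \<in> carrier_mat ny nv" "Gyd \<in> carrier_mat ny nd" "Gyu \<in> carrier_mat ny nu"
    and G_stable: "RHinf (blk3 Gwv Gwd Gwu Gzv Gzd Gzu Gyv Gyd Gyu)"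
    and K_dim: "K \<in> carrier_mat nu ny"
begin

abbreviation "G \<equiv> blk3 Gwv Gwd Gwu Gzv Gzd Gzu Gyv Gyd Gyu"

text \<open>Environment and controller together, as one block-diagonal feedback around \<open>G\<close>.\<close>
abbreviation "env_ctrl Gbar \<equiv> blk3 Gbar (0\<^sub>m nv nz) (0\<^sub>m nv ny) (0\<^sub>m nd nw) (0\<^sub>m nd nz) (0\<^sub>m nd ny)
  (0\<^sub>m nu nw) (0\<^sub>m nu nz) K"

lemma G_carrier: "G \<in> carrier_mat (nw + nz + ny) (nv + nd + nu)"
  using blk3_carrier[OF dims] .

lemma env_ctrl_carrier:
  "Gbar \<in> carrier_mat nv nw \<Longrightarrow> env_ctrl Gbar \<in> carrier_mat (nv + nd + nu) (nw + nz + ny)"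
  using K_dim by (intro blk3_carrier) auto

lemmas submat_G = submat_blk3[OF dims]

lemma submat_env_ctrl:
  assumes "Gbar \<in> carrier_mat nv nw"
  shows "submat (env_ctrl Gbar) 0 nv 0 nw = Gbar" "submat (env_ctrl Gbar) 0 nv nw nz = 0\<^sub>m nv nz"
    "submat (env_ctrl Gbar) 0 nv (nw + nz) ny = 0\<^sub>m nv ny"
    "submat (env_ctrl Gbar) nv nd 0 nw = 0\<^sub>m nd nw" "submat (env_ctrl Gbar) nv nd nw nz = 0\<^sub>m nd nz"
    "submat (env_ctrl Gbar) nv nd (nw + nz) ny = 0\<^sub>m nd ny"
    "submat (env_ctrl Gbar) (nv + nd) nu 0 nw = 0\<^sub>m nu nw"
    "submat (env_ctrl Gbar) (nv + nd) nu nw nz = 0\<^sub>m nu nz"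
    "submat (env_ctrl Gbar) (nv + nd) nu (nw + nz) ny = K"
  using submat_blk3[OF assms zero_carrier_mat zero_carrier_mat zero_carrier_mat zero_carrier_mat
      zero_carrier_mat zero_carrier_mat zero_carrier_mat K_dim] by auto

lemma RHinf_G_blocks: "RHinf Gwv" "RHinf Gwu" "RHinf Gyv" "RHinf Gyu"
proof -
  note R = RHinf_submat[OF G_stable G_carrier]
  show "RHinf Gwv" using R[of 0 nw 0 nv] submat_G by simp
  show "RHinf Gwu" using R[of 0 nw "nv + nd" nu] submat_G by simp
  show "RHinf Gyv" using R[of "nw + nz" ny 0 nv] submat_G by simp
  show "RHinf Gyu" using R[of "nw + nz" ny "nv + nd" nu] submat_G by simp
qed

lemma submat_env_ctrl_loop:
  assumes Gb: "Gbar \<in> carrier_mat nv nw" and W: "W \<in> carrier_mat (nv + nd + nu) (nw + nz + ny)"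
    and cols: "c0 + nc \<le> nw + nz + ny"
  defines "F \<equiv> env_ctrl Gbar + env_ctrl Gbar * (G * W)"
  shows "submat F 0 nv c0 nc = submat (env_ctrl Gbar) 0 nv c0 nc
      + Gbar * (Gwv * submat W 0 nv c0 nc + Gwd * submat W nv nd c0 nc + Gwu * submat W (nv + nd) nu c0 nc)"
    "submat F nv nd c0 nc = submat (env_ctrl Gbar) nv nd c0 nc"
    "submat F (nv + nd) nu c0 nc = submat (env_ctrl Gbar) (nv + nd) nu c0 nc
      + K * (Gyv * submat W 0 nv c0 nc + Gyd * submat W nv nd c0 nc + Gyu * submat W (nv + nd) nu c0 nc)"
proof -
  have C: "env_ctrl Gbar \<in> carrier_mat (nv + nd + nu) (nw + nz + ny)" using env_ctrl_carrier[OF Gb] .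
  have GW: "G * W \<in> carrier_mat (nw + nz + ny) (nw + nz + ny)" using G_carrier W by auto
  note expand = submat_add[OF C mult_carrier_mat[OF C GW]] submat_mult3[OF C GW] submat_mult3[OF G_carrier W]
  note blocks = cols submat_G submat_env_ctrl[OF Gb] dims Gb K_dim
  show "submat F 0 nv c0 nc = submat (env_ctrl Gbar) 0 nv c0 nc
      + Gbar * (Gwv * submat W 0 nv c0 nc + Gwd * submat W nv nd c0 nc + Gwu * submat W (nv + nd) nu c0 nc)"
    unfolding F_def using blocks by (simp add: expand)
  show "submat F nv nd c0 nc = submat (env_ctrl Gbar) nv nd c0 nc"
    unfolding F_def using blocks by (simp add: expand)
  show "submat F (nv + nd) nu c0 nc = submat (env_ctrl Gbar) (nv + nd) nu c0 nc
      + K * (Gyv * submat W 0 nv c0 nc + Gyd * submat W nv nd c0 nc + Gyu * submat W (nv + nd) nu c0 nc)"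
    unfolding F_def using blocks by (simp add: expand)
qed



lemma youla_inverse:
  assumes Q: "Q \<in> carrier_mat nu ny" and Q1: "Q = K + K * (Gyu * Q)" and Q2: "Q = K + Q * (Gyu * K)"
  shows "(1\<^sub>m nu + - (K * Gyu)) * (1\<^sub>m nu + Q * Gyu) = 1\<^sub>m nu"
    "(1\<^sub>m nu + Q * Gyu) * (1\<^sub>m nu + - (K * Gyu)) = 1\<^sub>m nu"
    "(1\<^sub>m nu + - (K * Gyu)) * Q = K"
proof -
  note dm = dims K_dim
  have QG: "Q * Gyu = K * Gyu + K * (Gyu * (Q * Gyu))"
  proof -
    have "Q * Gyu = (K + K * (Gyu * Q)) * Gyu" using arg_cong[OF Q1, of "\<lambda>t. t * Gyu"] .
    also have "\<dots> = K * Gyu + K * (Gyu * (Q * Gyu))" using Q dm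
      by (simp add: mat_distrib_assoc; (intro eq_matI; auto)?)
    finally show ?thesis .
  qed
  show e1: "(1\<^sub>m nu + - (K * Gyu)) * (1\<^sub>m nu + Q * Gyu) = 1\<^sub>m nu"
  proof -
    have "(1\<^sub>m nu + - (K * Gyu)) * (1\<^sub>m nu + Q * Gyu)
      = 1\<^sub>m nu + Q * Gyu + - (K * Gyu) + - (K * (Gyu * (Q * Gyu)))"
      using Q dm by (simp add: mat_distrib_assoc; (intro eq_matI; auto)?)
    also have "\<dots>
      = 1\<^sub>m nu + (K * Gyu + K * (Gyu * (Q * Gyu))) + - (K * Gyu) + - (K * (Gyu * (Q * Gyu)))"
      unfolding QG[symmetric] ..
    also have "\<dots> = 1\<^sub>m nu" using Q dm by (intro eq_matI) auto
    finally show ?thesis .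
  qed
  have c1: "1\<^sub>m nu + - (K * Gyu) \<in> carrier_mat nu nu" "1\<^sub>m nu + Q * Gyu \<in> carrier_mat nu nu"
    using Q dm by auto
  show "(1\<^sub>m nu + Q * Gyu) * (1\<^sub>m nu + - (K * Gyu)) = 1\<^sub>m nu"
    using mat_mult_left_right_inverse[OF c1 e1] .
  show "(1\<^sub>m nu + - (K * Gyu)) * Q = K"
  proof -
    have "(1\<^sub>m nu + - (K * Gyu)) * Q = Q + - (K * (Gyu * Q))"
      using Q dm by (simp add: mat_distrib_assoc; (intro eq_matI; auto)?)
    also have "\<dots> = K" using Q dm by (intro mat_add_uminus_of_eq_add[OF _ _ Q1]) auto
    finally show ?thesis .
  qed
qed

text \<open>With the trivial environment, the \<open>(u, y)\<close> block of the closed loop is the Youla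
  parameter of \<open>K\<close>.\<close>
lemma youla_param_of_retrofit:
  assumes st: "int_stable G (env_ctrl (0\<^sub>m nv nw))"
  obtains Q where "Q \<in> carrier_mat nu ny" "RHinf Q" "Q = K + K * (Gyu * Q)" "Q = K + Q * (Gyu * K)"
proof -
  note dm = dims K_dim
  have Gb: "0\<^sub>m nv nw \<in> carrier_mat nv nw" by simp
  obtain W where W: "W \<in> carrier_mat (nv + nd + nu) (nw + nz + ny)" and sW: "RHinf W"
    and eq1: "W = env_ctrl (0\<^sub>m nv nw) + env_ctrl (0\<^sub>m nv nw) * G * W"
      and eq2: "W = env_ctrl (0\<^sub>m nv nw) + W * G * env_ctrl (0\<^sub>m nv nw)"
    using int_stable_controller_loop[OF G_carrier st] by metis
  have eq1': "W = env_ctrl (0\<^sub>m nv nw) + env_ctrl (0\<^sub>m nv nw) * (G * W)"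
    using eq1 W G_carrier env_ctrl_carrier[OF Gb] by simp
  note loop_rows = submat_env_ctrl_loop[OF Gb W]
  note env_ctrl_blocks = submat_env_ctrl[OF Gb]
  define Q where "Q = submat W (nv + nd) nu (nw + nz) ny"
  have Qc: "Q \<in> carrier_mat nu ny" unfolding Q_def by simp
  have sQ: "RHinf Q" unfolding Q_def using RHinf_submat[OF sW W] by simp
  have Wvy: "submat W 0 nv (nw + nz) ny = 0\<^sub>m nv ny"
    using loop_rows(1)[of "nw + nz" ny] eq1'[symmetric] env_ctrl_blocks dm by simp
  have Wdy: "submat W nv nd (nw + nz) ny = 0\<^sub>m nd ny"
    using loop_rows(2)[of "nw + nz" ny] eq1'[symmetric] env_ctrl_blocks dm by simp
  have Q1: "Q = K + K * (Gyu * Q)"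
    using loop_rows(3)[of "nw + nz" ny] eq1'[symmetric] env_ctrl_blocks dm Wvy Wdy unfolding Q_def
    by simp
  have C: "env_ctrl (0\<^sub>m nv nw) \<in> carrier_mat (nv + nd + nu) (nw + nz + ny)" using env_ctrl_carrier[OF Gb] .
  have WG: "W * G \<in> carrier_mat (nv + nd + nu) (nv + nd + nu)" using G_carrier W by auto
  note expand = submat_add[OF C mult_carrier_mat[OF WG C]] submat_mult3[OF WG C]
    submat_mult3[OF W G_carrier]
  have Wuw: "submat W (nv + nd) nu 0 nw = 0\<^sub>m nu nw"
    using arg_cong[OF eq2, of "\<lambda>M. submat M (nv + nd) nu 0 nw"] env_ctrl_blocks dm submat_G
    by (simp add: expand)
  have Wuz: "submat W (nv + nd) nu nw nz = 0\<^sub>m nu nz"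
    using arg_cong[OF eq2, of "\<lambda>M. submat M (nv + nd) nu nw nz"] env_ctrl_blocks dm submat_G
    by (simp add: expand)
  have Q2: "Q = K + Q * (Gyu * K)"
    using arg_cong[OF eq2, of "\<lambda>M. submat M (nv + nd) nu (nw + nz) ny"] env_ctrl_blocks dm submat_G
      Wuw Wuz Qc
    unfolding Q_def by (simp add: expand mat_distrib_assoc)
  show ?thesis using that[OF Qc sQ Q1 Q2] .
qed

lemma youla_mat_inverse:
  assumes Q: "Q \<in> carrier_mat nu ny" and Q1: "Q = K + K * (Gyu * Q)" and Q2: "Q = K + Q * (Gyu * K)"
  shows "mat_inverse (1\<^sub>m nu + Q * Gyu) \<noteq> None" "K = the (mat_inverse (1\<^sub>m nu + Q * Gyu)) * Q"
proof -
  note inverse = youla_inverse[OF Q Q1 Q2]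
  have A: "1\<^sub>m nu + Q * Gyu \<in> carrier_mat nu nu" and M: "1\<^sub>m nu + - (K * Gyu) \<in> carrier_mat nu nu"
    using Q dims K_dim by auto
  show invertible: "mat_inverse (1\<^sub>m nu + Q * Gyu) \<noteq> None"
  proof
    assume "mat_inverse (1\<^sub>m nu + Q * Gyu) = None"
    then have "1\<^sub>m nu + Q * Gyu \<notin> Units (ring_mat TYPE(rfun) nu ())" by (rule mat_inverse(1)[OF A])
    moreover have "1\<^sub>m nu + Q * Gyu \<in> Units (ring_mat TYPE(rfun) nu ())"
      unfolding Units_def ring_mat_def using inverse A M by auto
    ultimately show False by blast
  qed
  then obtain Mi where Mi: "mat_inverse (1\<^sub>m nu + Q * Gyu) = Some Mi" by auto
  from mat_inverse(2)[OF A Mi]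
  have Mi_inv: "Mi * (1\<^sub>m nu + Q * Gyu) = 1\<^sub>m nu" and Mi_c: "Mi \<in> carrier_mat nu nu" by auto
  have "Mi = Mi * ((1\<^sub>m nu + Q * Gyu) * (1\<^sub>m nu + - (K * Gyu)))"
    unfolding inverse(2) using Mi_c by simp
  also have "\<dots> = 1\<^sub>m nu + - (K * Gyu)"
    unfolding assoc_mult_mat[OF Mi_c A M, symmetric] Mi_inv by (rule left_mult_one_mat[OF M])
  finally show "K = the (mat_inverse (1\<^sub>m nu + Q * Gyu)) * Q" unfolding Mi using inverse(3) by simp
qed

text \<open>Under a controller with Youla parameter \<open>Q\<close>, the environment effectively sees the
  interaction map \<open>Gwv + Gwu Q Gyv\<close> instead of \<open>Gwv\<close>.\<close>
lemma retrofit_environment_loop: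
  assumes Gb: "Gbar \<in> carrier_mat nv nw" and st: "int_stable G (env_ctrl Gbar)"
    and Q: "Q \<in> carrier_mat nu ny" and Q1: "Q = K + K * (Gyu * Q)" and Q2: "Q = K + Q * (Gyu * K)"
  obtains X where "X \<in> carrier_mat nv nw" "RHinf X" "X = Gbar + Gbar * ((Gwv + Gwu * Q * Gyv) * X)"
proof -
  note dm = dims K_dim
  obtain W where W: "W \<in> carrier_mat (nv + nd + nu) (nw + nz + ny)" and sW: "RHinf W"
    and loop: "W = env_ctrl Gbar + env_ctrl Gbar * G * W"
    using int_stable_controller_loop[OF G_carrier st] by metis
  have loop': "env_ctrl Gbar + env_ctrl Gbar * (G * W) = W"
    using loop W G_carrier env_ctrl_carrier[OF Gb] by simp
  note loop_rows = submat_env_ctrl_loop[OF Gb W, of 0 nw, unfolded loop']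
  note env_ctrl_blocks = submat_env_ctrl[OF Gb]
  define X where "X = submat W 0 nv 0 nw"
  define Y where "Y = submat W (nv + nd) nu 0 nw"
  have Xc: "X \<in> carrier_mat nv nw" and Yc: "Y \<in> carrier_mat nu nw" unfolding X_def Y_def by auto
  have Z: "submat W nv nd 0 nw = 0\<^sub>m nd nw" using loop_rows(2) env_ctrl_blocks by simp
  have Y_eq: "Y = K * (Gyv * X) + K * (Gyu * Y)"
    using loop_rows(3) env_ctrl_blocks Z dm unfolding X_def Y_def by (simp add: mat_distrib_assoc)
  have X_eq: "X = Gbar + Gbar * (Gwv * X + Gwu * Y)"
    using loop_rows(1) env_ctrl_blocks Z dm Gb unfolding X_def Y_def by simp
  note inverse = youla_inverse[OF Q Q1 Q2]
  have "Y = ((1\<^sub>m nu + Q * Gyu) * (1\<^sub>m nu + - (K * Gyu))) * Y" unfolding inverse(2) using Yc by simp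
  also have "\<dots> = (1\<^sub>m nu + Q * Gyu) * ((1\<^sub>m nu + - (K * Gyu)) * Y)" using Yc Q dm
    by (intro mat_mult_assoc) auto
  also have "(1\<^sub>m nu + - (K * Gyu)) * Y = Y + - (K * (Gyu * Y))"
    using Yc Q dm by (simp add: mat_distrib_assoc; (intro eq_matI; auto)?)
  also have "\<dots> = K * (Gyv * X)" using Xc Yc dm by (intro mat_add_uminus_of_eq_add[OF _ _ Y_eq]) auto
  also have "(1\<^sub>m nu + Q * Gyu) * (K * (Gyv * X)) = (K + Q * (Gyu * K)) * (Gyv * X)"
    using Xc Q dm by (simp add: mat_distrib_assoc; (intro eq_matI; auto)?)
  finally have "Y = Q * (Gyv * X)" unfolding Q2[symmetric] .
  then have "X = Gbar + Gbar * ((Gwv + Gwu * Q * Gyv) * X)"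
    using X_eq Xc Q dm by (simp add: mat_distrib_assoc)
  moreover have "RHinf X" unfolding X_def using RHinf_submat[OF sW W] by simp
  ultimately show ?thesis using that Xc by blast
qed

lemma interaction_zero_of_retrofit:
  assumes retrofit: "\<forall>Gbar \<in> carrier_mat nv nw. proper_tfm Gbar \<longrightarrow> int_stable Gbar Gwv \<longrightarrow>
      int_stable G (env_ctrl Gbar)"
    and Q: "Q \<in> carrier_mat nu ny" "RHinf Q"
    and Q1: "Q = K + K * (Gyu * Q)" and Q2: "Q = K + Q * (Gyu * K)"
  shows "Gwu * Q * Gyv = 0\<^sub>m nw nv"
proof (rule eq_matI)
  note dm = dims K_dim
  let ?D = "Gwu * Q * Gyv"
  have "?D \<in> carrier_mat nw nv" using Q dm by auto
  moreover have "RHinf ?D" using Q dm RHinf_G_blocks by (intro RHinf_mult) auto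
  ultimately have D: "?D \<in> carrier_mat nw nv" "RHinf ?D" by blast+
  fix i j assume "i < dim_row (0\<^sub>m nw nv :: tfm)" "j < dim_col (0\<^sub>m nw nv :: tfm)"
  then have ij: "i < nw" "j < nv" by auto
  show "?D $$ (i, j) = 0\<^sub>m nw nv $$ (i, j)"
  proof (rule ccontr)
    assume "?D $$ (i, j) \<noteq> 0\<^sub>m nw nv $$ (i, j)"
    then have "?D $$ (i, j) \<noteq> 0" using ij by simp
    moreover have "stable_rf (?D $$ (i, j))" "stable_rf (Gwv $$ (i, j))"
      using D RHinf_G_blocks dm ij unfolding RHinf_def by auto
    ultimately obtain h r where h: "proper_rf h"
      and r: "stable_rf r" "r = h + h * Gwv $$ (i, j) * r"
      and unstable: "\<And>x. stable_rf x \<Longrightarrow> x \<noteq> h + h * (Gwv $$ (i, j) + ?D $$ (i, j)) * x"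
      using destabilizing_gain by metis
    define Gbar where "Gbar = single_entry_mat nv nw j i h"
    have Gb: "Gbar \<in> carrier_mat nv nw" unfolding Gbar_def by simp
    have "single_entry_mat nv nw j i r = Gbar + Gbar * Gwv * single_entry_mat nv nw j i r"
      unfolding Gbar_def using dm ij r(2)
      by (simp add: single_entry_mat_mult_mult single_entry_mat_add)
    then have "int_stable Gbar Gwv"
      using dm r RHinf_G_blocks
      by (intro int_stable_of_stable_controller[OF Gb]) (auto simp: RHinf_def stable_rf_0)
    moreover have "proper_tfm Gbar" unfolding proper_tfm_def Gbar_def using h proper_rf_0 by auto
    ultimately have "int_stable G (env_ctrl Gbar)" using retrofit Gb by blast
    then obtain X where X: "X \<in> carrier_mat nv nw" "RHinf X"
      and loop: "X = Gbar + Gbar * ((Gwv + ?D) * X)"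
      using retrofit_environment_loop[OF Gb _ Q(1) Q1 Q2] by blast
    have "X $$ (j, i) = h + h * (Gwv + ?D) $$ (i, j) * X $$ (j, i)"
      using single_entry_fixpoint[OF _ X(1) ij(2,1) loop[unfolded Gbar_def]] D dm by simp
    moreover have "stable_rf (X $$ (j, i))" using X ij unfolding RHinf_def by auto
    ultimately show False using unstable D dm ij by simp
  qed
qed (use Q(1) dims in auto)

lemma youla_fixpoint_of_inverse:
  assumes Q: "Q \<in> carrier_mat nu ny" and inv: "mat_inverse (1\<^sub>m nu + Q * Gyu) \<noteq> None"
    and K_eq: "K = the (mat_inverse (1\<^sub>m nu + Q * Gyu)) * Q"
  shows "Q = K + K * (Gyu * Q)"
proof -
  note dm = dims K_dim
  obtain Mi where Mi: "mat_inverse (1\<^sub>m nu + Q * Gyu) = Some Mi" using inv by auto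
  have A: "1\<^sub>m nu + Q * Gyu \<in> carrier_mat nu nu" using Q dm by auto
  from mat_inverse(2)[OF A Mi] have Mi_inv: "Mi * (1\<^sub>m nu + Q * Gyu) = 1\<^sub>m nu"
    and Mi_c: "Mi \<in> carrier_mat nu nu" by auto
  have K_Mi: "K = Mi * Q" using K_eq Mi by simp
  have "K + K * (Gyu * Q) = Mi * ((1\<^sub>m nu + Q * Gyu) * Q)"
    unfolding K_Mi using Mi_c Q dm by (simp add: mat_distrib_assoc; (intro eq_matI; auto)?)
  also have "\<dots> = (Mi * (1\<^sub>m nu + Q * Gyu)) * Q" using Mi_c Q dm
    by (intro mat_mult_assoc[symmetric]) auto
  also have "\<dots> = Q" unfolding Mi_inv using Q by simp
  finally show ?thesis by simp
qed

text \<open>The closed loop of the whole system, assembled from the closed loop \<open>R\<close> of the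
  environment with \<open>Gwv\<close> and the Youla parameter \<open>Q\<close>.\<close>
definition youla_loop :: "tfm \<Rightarrow> tfm \<Rightarrow> tfm" where
  "youla_loop R Q = blk3 R (0\<^sub>m nv nz) (R * (Gwu * Q)) (0\<^sub>m nd nw) (0\<^sub>m nd nz) (0\<^sub>m nd ny)
      (Q * (Gyv * R)) (0\<^sub>m nu nz) (Q + Q * (Gyv * (R * (Gwu * Q))))"

lemma youla_loop_carrier:
  "R \<in> carrier_mat nv nw \<Longrightarrow> Q \<in> carrier_mat nu ny
    \<Longrightarrow> youla_loop R Q \<in> carrier_mat (nv + nd + nu) (nw + nz + ny)"
  unfolding youla_loop_def using dims by (intro blk3_carrier) auto

lemma submat_youla_loop:
  assumes R: "R \<in> carrier_mat nv nw" and Q: "Q \<in> carrier_mat nu ny"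
  shows "submat (youla_loop R Q) 0 nv 0 nw = R" "submat (youla_loop R Q) 0 nv nw nz = 0\<^sub>m nv nz"
    "submat (youla_loop R Q) 0 nv (nw + nz) ny = R * (Gwu * Q)"
    "submat (youla_loop R Q) nv nd 0 nw = 0\<^sub>m nd nw" "submat (youla_loop R Q) nv nd nw nz = 0\<^sub>m nd nz"
    "submat (youla_loop R Q) nv nd (nw + nz) ny = 0\<^sub>m nd ny"
    "submat (youla_loop R Q) (nv + nd) nu 0 nw = Q * (Gyv * R)"
    "submat (youla_loop R Q) (nv + nd) nu nw nz = 0\<^sub>m nu nz"
    "submat (youla_loop R Q) (nv + nd) nu (nw + nz) ny = Q + Q * (Gyv * (R * (Gwu * Q)))"
proof -
  have c: "R * (Gwu * Q) \<in> carrier_mat nv ny" "Q * (Gyv * R) \<in> carrier_mat nu nw"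
    "Q + Q * (Gyv * (R * (Gwu * Q))) \<in> carrier_mat nu ny"
    using R Q dims by auto
  from submat_blk3[OF R zero_carrier_mat[of nv nz] c(1) zero_carrier_mat[of nd nw]
      zero_carrier_mat[of nd nz] zero_carrier_mat[of nd ny] c(2) zero_carrier_mat[of nu nz] c(3)]
  show "submat (youla_loop R Q) 0 nv 0 nw = R" "submat (youla_loop R Q) 0 nv nw nz = 0\<^sub>m nv nz"
    "submat (youla_loop R Q) 0 nv (nw + nz) ny = R * (Gwu * Q)"
    "submat (youla_loop R Q) nv nd 0 nw = 0\<^sub>m nd nw" "submat (youla_loop R Q) nv nd nw nz = 0\<^sub>m nd nz"
    "submat (youla_loop R Q) nv nd (nw + nz) ny = 0\<^sub>m nd ny"
    "submat (youla_loop R Q) (nv + nd) nu 0 nw = Q * (Gyv * R)"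
    "submat (youla_loop R Q) (nv + nd) nu nw nz = 0\<^sub>m nu nz"
    "submat (youla_loop R Q) (nv + nd) nu (nw + nz) ny = Q + Q * (Gyv * (R * (Gwu * Q)))"
    unfolding youla_loop_def by simp_all
qed

lemma RHinf_youla_loop:
  assumes R: "R \<in> carrier_mat nv nw" "RHinf R" and Q: "Q \<in> carrier_mat nu ny" "RHinf Q"
  shows "RHinf (youla_loop R Q)"
proof -
  have c: "R * (Gwu * Q) \<in> carrier_mat nv ny" "Q * (Gyv * R) \<in> carrier_mat nu nw"
    "Q + Q * (Gyv * (R * (Gwu * Q))) \<in> carrier_mat nu ny"
    using R Q dims by auto
  show ?thesis
    unfolding youla_loop_def
    by (rule RHinf_blk3[OF R(1) zero_carrier_mat[of nv nz] c(1) zero_carrier_mat[of nd nw]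
          zero_carrier_mat[of nd nz] zero_carrier_mat[of nd ny] c(2) zero_carrier_mat[of nu nz] c(3)])
      (use R Q dims RHinf_G_blocks in \<open>auto intro!: RHinf_zero RHinf_add RHinf_mult\<close>)
qed

lemma youla_loop_env_rows:
  assumes Gb: "Gbar \<in> carrier_mat nv nw" and R: "R \<in> carrier_mat nv nw" and Q: "Q \<in> carrier_mat nu ny"
    and R_loop: "R = Gbar + Gbar * (Gwv * R)" and D: "Gwu * Q * Gyv = 0\<^sub>m nw nv"
  defines "W \<equiv> env_ctrl Gbar + env_ctrl Gbar * (G * youla_loop R Q)"
  shows "submat W 0 nv 0 nw = R" "submat W 0 nv nw nz = 0\<^sub>m nv nz"
    "submat W 0 nv (nw + nz) ny = R * (Gwu * Q)"
proof -
  note dm = dims K_dim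
  note rows = submat_env_ctrl_loop(1)[OF Gb youla_loop_carrier[OF R Q], folded W_def]
  note blocks = submat_youla_loop[OF R Q] submat_env_ctrl[OF Gb]
  have D0: "Gwu * (Q * (Gyv * X)) = 0\<^sub>m nw c" if "X \<in> carrier_mat nv c" for X c
  proof -
    have "Gwu * (Q * (Gyv * X)) = Gwu * Q * Gyv * X" using that Q dm
      by (simp add: mat_distrib_assoc)
    then show ?thesis unfolding D using that by simp
  qed
  show "submat W 0 nv 0 nw = R"
    using rows[of 0 nw] blocks R_loop D0[OF R] R Q Gb dm by simp
  show "submat W 0 nv nw nz = 0\<^sub>m nv nz"
    using rows[of nw nz] blocks R Q Gb dm by simp
  have "submat W 0 nv (nw + nz) ny = Gbar * (Gwv * (R * (Gwu * Q))) + Gbar * (Gwu * Q)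
      + Gbar * (Gwu * (Q * (Gyv * (R * (Gwu * Q)))))"
    using rows[of "nw + nz" ny] blocks R Q Gb dm
    by (simp add: mat_distrib_assoc; (intro eq_matI; auto)?)
  also have "\<dots> = (Gbar + Gbar * (Gwv * R)) * (Gwu * Q)"
    using D0[of "R * (Gwu * Q)" ny] R Q Gb dm
    by (simp add: mat_distrib_assoc; (intro eq_matI; auto)?)
  finally show "submat W 0 nv (nw + nz) ny = R * (Gwu * Q)" unfolding R_loop[symmetric] .
qed

lemma youla_loop_ctrl_rows:
  assumes Gb: "Gbar \<in> carrier_mat nv nw" and R: "R \<in> carrier_mat nv nw" and Q: "Q \<in> carrier_mat nu ny"
    and Q_loop: "Q = K + K * (Gyu * Q)"
  defines "W \<equiv> env_ctrl Gbar + env_ctrl Gbar * (G * youla_loop R Q)"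
  shows "submat W (nv + nd) nu 0 nw = Q * (Gyv * R)" "submat W (nv + nd) nu nw nz = 0\<^sub>m nu nz"
    "submat W (nv + nd) nu (nw + nz) ny = Q + Q * (Gyv * (R * (Gwu * Q)))"
proof -
  note dm = dims K_dim
  note rows = submat_env_ctrl_loop(3)[OF Gb youla_loop_carrier[OF R Q], folded W_def]
  note blocks = submat_youla_loop[OF R Q] submat_env_ctrl[OF Gb]
  have "submat W (nv + nd) nu 0 nw = (K + K * (Gyu * Q)) * (Gyv * R)"
    using rows[of 0 nw] blocks R Q Gb dm by (simp add: mat_distrib_assoc; (intro eq_matI; auto)?)
  then show "submat W (nv + nd) nu 0 nw = Q * (Gyv * R)" unfolding Q_loop[symmetric] .
  show "submat W (nv + nd) nu nw nz = 0\<^sub>m nu nz"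
    using rows[of nw nz] blocks R Q Gb dm by simp
  have "submat W (nv + nd) nu (nw + nz) ny
    = (K + K * (Gyu * Q)) + (K + K * (Gyu * Q)) * (Gyv * (R * (Gwu * Q)))"
    using rows[of "nw + nz" ny] blocks R Q Gb dm
    by (simp add: mat_distrib_assoc; (intro eq_matI; auto)?)
  then show "submat W (nv + nd) nu (nw + nz) ny = Q + Q * (Gyv * (R * (Gwu * Q)))"
    unfolding Q_loop[symmetric] .
qed

lemma youla_loop_fixpoint:
  assumes Gb: "Gbar \<in> carrier_mat nv nw" and R: "R \<in> carrier_mat nv nw" and Q: "Q \<in> carrier_mat nu ny"
    and R_loop: "R = Gbar + Gbar * (Gwv * R)" and Q_loop: "Q = K + K * (Gyu * Q)"
    and D: "Gwu * Q * Gyv = 0\<^sub>m nw nv"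
  shows "youla_loop R Q = env_ctrl Gbar + env_ctrl Gbar * G * youla_loop R Q"
proof -
  have W: "youla_loop R Q \<in> carrier_mat (nv + nd + nu) (nw + nz + ny)"
    using youla_loop_carrier[OF R Q] .
  have "youla_loop R Q = env_ctrl Gbar + env_ctrl Gbar * (G * youla_loop R Q)"
  proof (rule blk3_eq_matI[OF W])
    show "env_ctrl Gbar + env_ctrl Gbar * (G * youla_loop R Q)
      \<in> carrier_mat (nv + nd + nu) (nw + nz + ny)"
      using env_ctrl_carrier[OF Gb] G_carrier W by auto
    show "submat (youla_loop R Q) ra na cb nb
      = submat (env_ctrl Gbar + env_ctrl Gbar * (G * youla_loop R Q)) ra na cb nb"
      if "(ra, na) \<in> {(0, nv), (nv, nd), (nv + nd, nu)}"
        "(cb, nb) \<in> {(0, nw), (nw, nz), (nw + nz, ny)}" for ra na cb nb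
      using that submat_youla_loop[OF R Q] youla_loop_env_rows[OF Gb R Q R_loop D]
        youla_loop_ctrl_rows[OF Gb R Q Q_loop]
        submat_env_ctrl_loop(2)[OF Gb W] submat_env_ctrl[OF Gb] by auto
  qed
  then show ?thesis using env_ctrl_carrier[OF Gb] G_carrier W by simp
qed

lemma retrofit_of_youla:
  assumes Q: "Q \<in> carrier_mat nu ny" "RHinf Q" and inv: "mat_inverse (1\<^sub>m nu + Q * Gyu) \<noteq> None"
    and K_eq: "K = the (mat_inverse (1\<^sub>m nu + Q * Gyu)) * Q" and D: "Gwu * Q * Gyv = 0\<^sub>m nw nv"
    and Gb: "Gbar \<in> carrier_mat nv nw" and admissible: "int_stable Gbar Gwv"
  shows "int_stable G (env_ctrl Gbar)"
proof -
  obtain R where R: "R \<in> carrier_mat nv nw" "RHinf R" and R_loop: "R = Gbar + Gbar * Gwv * R"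
    using int_stable_plant_loop[OF Gb admissible] by blast
  have "R = Gbar + Gbar * (Gwv * R)" using R_loop R Gb dims by simp
  then have "youla_loop R Q = env_ctrl Gbar + env_ctrl Gbar * G * youla_loop R Q"
    using youla_loop_fixpoint[OF Gb R(1) Q(1) _ youla_fixpoint_of_inverse[OF Q(1) inv K_eq] D]
    by blast
  then show ?thesis
    using int_stable_of_stable_plant[OF G_carrier env_ctrl_carrier[OF Gb] G_stable
        youla_loop_carrier[OF R(1) Q(1)]] RHinf_youla_loop[OF R Q]
    by blast
qed

end

theorem theorem1:
  fixes nw nz ny nv nd nu :: nat
    and Gwv Gwd Gwu Gzv Gzd Gzu Gyv Gyd Gyu K :: tfm
  assumes dims: "Gwv \<in> carrier_mat nw nv" "Gwd \<in> carrier_mat nw nd" "Gwu \<in> carrier_mat nw nu"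
    "Gzv \<in> carrier_mat nz nv" "Gzd \<in> carrier_mat nz nd" "Gzu \<in> carrier_mat nz nu"
    "Gyv \<in> carrier_mat ny nv" "Gyd \<in> carrier_mat ny nd" "Gyu \<in> carrier_mat ny nu"
    and G_stable: "RHinf (blk3 Gwv Gwd Gwu Gzv Gzd Gzu Gyv Gyd Gyu)"
    and K_dim: "K \<in> carrier_mat nu ny"
    and K_proper: "proper_tfm K"
  shows "(\<forall>Gbar \<in> carrier_mat nv nw. proper_tfm Gbar \<longrightarrow> int_stable Gbar Gwv \<longrightarrow>
            int_stable (blk3 Gwv Gwd Gwu Gzv Gzd Gzu Gyv Gyd Gyu)
                       (blk3 Gbar (0\<^sub>m nv nz) (0\<^sub>m nv ny)
                             (0\<^sub>m nd nw) (0\<^sub>m nd nz) (0\<^sub>m nd ny)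
                             (0\<^sub>m nu nw) (0\<^sub>m nu nz) K))
     \<longleftrightarrow>
     (\<exists>Q \<in> carrier_mat nu ny. RHinf Q \<and>
        mat_inverse (1\<^sub>m nu + Q * Gyu) \<noteq> None \<and>
        K = the (mat_inverse (1\<^sub>m nu + Q * Gyu)) * Q \<and>
        Gwu * Q * Gyv = 0\<^sub>m nw nv)"
proof -
  interpret retrofit_setting nw nz ny nv nd nu Gwv Gwd Gwu Gzv Gzd Gzu Gyv Gyd Gyu K
    using dims G_stable K_dim by unfold_locales
  show ?thesis
  proof
    assume retrofit: "\<forall>Gbar \<in> carrier_mat nv nw. proper_tfm Gbar \<longrightarrow> int_stable Gbar Gwv \<longrightarrow>
      int_stable G (env_ctrl Gbar)"
    have "int_stable (0\<^sub>m nv nw) Gwv"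
      using dims RHinf_G_blocks RHinf_zero
      by (intro int_stable_of_stable_controller[of _ nv nw _ "0\<^sub>m nv nw"]) auto
    moreover have "proper_tfm (0\<^sub>m nv nw)" by (simp add: proper_tfm_def proper_rf_0)
    ultimately have "int_stable G (env_ctrl (0\<^sub>m nv nw))" using retrofit by auto
    then obtain Q where Q: "Q \<in> carrier_mat nu ny" "RHinf Q"
      and Q_loop: "Q = K + K * (Gyu * Q)" "Q = K + Q * (Gyu * K)"
      by (rule youla_param_of_retrofit)
    then show "\<exists>Q \<in> carrier_mat nu ny. RHinf Q \<and> mat_inverse (1\<^sub>m nu + Q * Gyu) \<noteq> None \<and>
      K = the (mat_inverse (1\<^sub>m nu + Q * Gyu)) * Q \<and> Gwu * Q * Gyv = 0\<^sub>m nw nv"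
      using youla_mat_inverse[OF Q(1) Q_loop] interaction_zero_of_retrofit[OF retrofit Q Q_loop]
      by blast
  qed (use retrofit_of_youla in blast)
qed

end
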